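(* Let $\alpha\in\ell^2$. The following are equivalent: (i) $R_\alpha$ is a compact operator on $\ell^2$; (ii) $\mathcal{L}:=\lim_{n\to\infty}L([n,\infty))=0$; (iii) for every $\epsilon>0$, the associated $(\epsilon,L)$-sequence has finite length.
   Context: $\mathbb{N}=\{0,1,2,\dots\}$; $(R_\alpha f)(k)=\alpha_k\sum_{j=0}^kf(j)$. For a finite natural interval $I$: $\mu(I)=\sum_{k\in I}|\alpha_k|^2$, $\|f\|_{2,I}=(\sum_{k\in I}|f(k)|^2)^{1/2}$, $l(I,f)=\sum_{k\in I}\sum_{n\in I\setminus\{k\}}|\alpha_k\alpha_n\sum_{j=\min(k,n)+1}^{\max(k,n)}f(j)|^2$, $L(I)=(\sup_{\|f\|_{2,I}\le1}l(I,f)/\mu(I))^{1/2}$ (sup over $f$ supported in $I$; $L(I)=0$ if $\alpha$ vanishes on $I$); $L([a,\infty))=\sup_{b\ge a}L([a,b])$ (so $\mathcal L\in[0,\infty]$ is the limit of a nonincreasing sequence). $(\epsilon,L)$-sequence: $c_0=0$, $c_{k+1}=\inf\{t\in\mathbb{N}:t>c_k,\ L([c_k,t-1])>\epsilon\}$ ($\inf\emptyset=+\infty$); it has finite length $N$ if $c_N<\infty$ and $c_{N+1}=+\infty$. *)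

theory Defs
  imports "HOL-Analysis.Analysis" "HOL-Library.Extended_Nat" "HOL-Library.Extended_Real"
begin

definition in_l2 :: "(nat \<Rightarrow> complex) \<Rightarrow> bool" where
  "in_l2 f \<longleftrightarrow> summable (\<lambda>k. (cmod (f k))^2)"

definition l2_norm :: "(nat \<Rightarrow> complex) \<Rightarrow> real" where
  "l2_norm f = sqrt (\<Sum>k. (cmod (f k))^2)"

text \<open>Compact (linear) operator on l2: maps l2 into l2 and every bounded sequence
  in l2 is mapped to a sequence having an l2-norm convergent subsequence
  (i.e. images of bounded sets are relatively compact).\<close>
definition compact_op_l2 :: "((nat \<Rightarrow> complex) \<Rightarrow> (nat \<Rightarrow> complex)) \<Rightarrow> bool" where
  "compact_op_l2 T \<longleftrightarrow>
     (\<forall>f. in_l2 f \<longrightarrow> in_l2 (T f)) \<and>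
     (\<forall>u :: nat \<Rightarrow> nat \<Rightarrow> complex. (\<forall>n. in_l2 (u n)) \<and> (\<exists>B. \<forall>n. l2_norm (u n) \<le> B) \<longrightarrow>
        (\<exists>r g. strict_mono r \<and> in_l2 g \<and>
               (\<lambda>n. l2_norm (\<lambda>k. T (u (r n)) k - g k)) \<longlonglongrightarrow> 0))"

definition R_op :: "(nat \<Rightarrow> complex) \<Rightarrow> (nat \<Rightarrow> complex) \<Rightarrow> (nat \<Rightarrow> complex)" where
  "R_op \<alpha> f = (\<lambda>k. \<alpha> k * (\<Sum>j\<le>k. f j))"

definition mu :: "(nat \<Rightarrow> complex) \<Rightarrow> nat \<Rightarrow> nat \<Rightarrow> real" where
  "mu \<alpha> a b = (\<Sum>k\<in>{a..b}. (cmod (\<alpha> k))^2)"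

definition norm2I :: "nat \<Rightarrow> nat \<Rightarrow> (nat \<Rightarrow> complex) \<Rightarrow> real" where
  "norm2I a b f = sqrt (\<Sum>k\<in>{a..b}. (cmod (f k))^2)"

definition lI :: "(nat \<Rightarrow> complex) \<Rightarrow> nat \<Rightarrow> nat \<Rightarrow> (nat \<Rightarrow> complex) \<Rightarrow> real" where
  "lI \<alpha> a b f = (\<Sum>k\<in>{a..b}. \<Sum>n\<in>{a..b} - {k}.
      (cmod (\<alpha> k * \<alpha> n * (\<Sum>j\<in>{min k n + 1..max k n}. f j)))^2)"

definition LI :: "(nat \<Rightarrow> complex) \<Rightarrow> nat \<Rightarrow> nat \<Rightarrow> real" where
  "LI \<alpha> a b = (if (\<forall>k\<in>{a..b}. \<alpha> k = 0) then 0 else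
      sqrt (Sup {lI \<alpha> a b f / mu \<alpha> a b | f. (\<forall>k. k \<notin> {a..b} \<longrightarrow> f k = 0) \<and> norm2I a b f \<le> 1}))"

definition Ltail :: "(nat \<Rightarrow> complex) \<Rightarrow> nat \<Rightarrow> ereal" where
  "Ltail \<alpha> a = (SUP b\<in>{a..}. ereal (LI \<alpha> a b))"

text \<open>The (\<epsilon>,L)-sequence, with values in nat \<union> {\<infinity>} (inf of empty set = \<infinity>).\<close>
primrec eps_L_seq :: "(nat \<Rightarrow> complex) \<Rightarrow> real \<Rightarrow> nat \<Rightarrow> enat" where
  "eps_L_seq \<alpha> \<epsilon> 0 = 0"
| "eps_L_seq \<alpha> \<epsilon> (Suc k) =
     (case eps_L_seq \<alpha> \<epsilon> k of
        \<infinity> \<Rightarrow> \<infinity>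
      | enat c \<Rightarrow> (if (\<exists>t. c < t \<and> LI \<alpha> c (t - 1) > \<epsilon>)
                   then enat (LEAST t. c < t \<and> LI \<alpha> c (t - 1) > \<epsilon>) else \<infinity>))"

definition finite_length :: "(nat \<Rightarrow> complex) \<Rightarrow> real \<Rightarrow> bool" where
  "finite_length \<alpha> \<epsilon> \<longleftrightarrow> (\<exists>N. eps_L_seq \<alpha> \<epsilon> N \<noteq> \<infinity> \<and> eps_L_seq \<alpha> \<epsilon> (Suc N) = \<infinity>)"

end

theory Submission
  imports Defs "HOL-Library.Diagonal_Subsequence"
begin

text \<open>All three conditions are equivalent to the vanishing Hardy condition
  \<open>(n+1) \<Sum>\<^sub>m\<^sub>\<ge>\<^sub>n |\<alpha>\<^sub>m|\<^sup>2 \<rightarrow> 0\<close>.  The weighted discrete Hardy inequality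
  \<open>\<Sum>\<^sub>n w\<^sub>n |\<Sum>\<^sub>j\<^sub>\<le>\<^sub>n h\<^sub>j|\<^sup>2 \<le> 4A \<Sum>\<^sub>j |h\<^sub>j|\<^sup>2\<close>, valid whenever \<open>(n+1) \<Sum>\<^sub>m\<^sub>\<ge>\<^sub>n w\<^sub>m \<le> A\<close>,
  bounds the upper triangular half of \<open>l(I,f)\<close> and so makes \<open>L\<close> uniformly small on far
  intervals; conversely, testing \<open>L\<close> with \<open>p\<^sup>-\<^sup>1\<^sup>/\<^sup>2\<close> on \<open>(p,2p]\<close> recovers the Hardy condition.
  The \<open>(\<epsilon>,L)\<close>-sequence has finite length as soon as \<open>L \<le> \<epsilon>\<close> on all intervals beyond
  some point, and once it stops at \<open>c\<close> we have \<open>L([c,b]) \<le> \<epsilon>\<close> for all \<open>b \<ge> c\<close>.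
  For compactness, the Hardy inequality on tails shows that \<open>R\<^sub>\<alpha>\<close> maps bounded coordinatewise
  null sequences to norm null ones (and a diagonal subsequence is coordinatewise convergent),
  while the unit vectors \<open>(n+1)\<^sup>-\<^sup>1\<^sup>/\<^sup>2 \<one>\<^sub>[\<^sub>0\<^sub>,\<^sub>n\<^sub>]\<close> are mapped to vectors whose mass beyond \<open>n\<close>
  is \<open>(n+1) \<Sum>\<^sub>m\<^sub>\<ge>\<^sub>n |\<alpha>\<^sub>m|\<^sup>2\<close>.\<close>

subsection \<open>A weighted discrete Hardy inequality\<close>

lemma sum_inverse_sqrt_le: "(\<Sum>j\<le>n. 1 / sqrt (real j + 1)) \<le> 2 * sqrt (real n + 1)"
proof (induction n)
  case 0
  then show ?case by simp
next
  case (Suc n)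
  define a where "a = sqrt (real n + 1)"
  define b where "b = sqrt (real n + 2)"
  have "a \<le> b" "b > 0" "a * a = real n + 1" "b * b = real n + 2"
    unfolding a_def b_def by auto
  have "(b - a) * (b + a) \<le> (b - a) * (2 * b)"
    using \<open>a \<le> b\<close> by (intro mult_left_mono) auto
  moreover have "(b - a) * (b + a) = 1"
    using \<open>a * a = real n + 1\<close> \<open>b * b = real n + 2\<close> by (simp add: algebra_simps)
  ultimately have "1 / b \<le> 2 * b - 2 * a"
    using \<open>b > 0\<close> by (simp add: field_simps)
  moreover have "sqrt (real (Suc n) + 1) = b"
    unfolding b_def by (simp add: add.commute)
  ultimately show ?case
    using Suc.IH unfolding a_def by (simp add: add.commute)
qed

lemma square_sum_le_sqrt_weighted:
  fixes h :: "nat \<Rightarrow> real"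
  shows "(\<Sum>j\<le>n. h j)\<^sup>2 \<le> 2 * sqrt (real n + 1) * (\<Sum>j\<le>n. sqrt (real j + 1) * (h j)\<^sup>2)"
proof -
  define s where "s j = sqrt (sqrt (real j + 1))" for j
  have s_nonzero: "s j \<noteq> 0" and s_square: "(s j)\<^sup>2 = sqrt (real j + 1)" for j
    unfolding s_def by simp_all
  have "(\<Sum>j\<le>n. h j) = (\<Sum>j\<le>n. (1 / s j) * (s j * h j))"
    by (intro sum.cong) (auto simp: s_nonzero)
  then have "(\<Sum>j\<le>n. h j)\<^sup>2 \<le> (\<Sum>j\<le>n. (1 / s j)\<^sup>2) * (\<Sum>j\<le>n. (s j * h j)\<^sup>2)"
    by (metis Cauchy_Schwarz_ineq_sum)
  also have "\<dots> = (\<Sum>j\<le>n. 1 / sqrt (real j + 1)) * (\<Sum>j\<le>n. sqrt (real j + 1) * (h j)\<^sup>2)"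
    by (simp add: power_divide power_mult_distrib s_square)
  also have "\<dots> \<le> 2 * sqrt (real n + 1) * (\<Sum>j\<le>n. sqrt (real j + 1) * (h j)\<^sup>2)"
    by (intro mult_right_mono sum_inverse_sqrt_le sum_nonneg) auto
  finally show ?thesis .
qed

lemma sum_weight_times_sqrt_le:
  fixes w :: "nat \<Rightarrow> real"
  assumes w_nonneg: "\<And>n. w n \<ge> 0"
    and hardy_bound: "\<And>n. n \<le> K \<Longrightarrow> real (n+1) * (\<Sum>m\<in>{n..K}. w m) \<le> A"
    and "j \<le> K"
  shows "(\<Sum>n\<in>{j..K}. w n * sqrt (real n + 1))
          \<le> (\<Sum>m\<in>{j..K}. w m) * sqrt (real j + 1) + A / sqrt (real j + 1)"
  using \<open>j \<le> K\<close>
proof (induction j rule: inc_induct)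
  case base
  have "0 \<le> real (K+1) * w K" "real (K+1) * w K \<le> A"
    using w_nonneg[of K] hardy_bound[of K] by simp_all
  then show ?case by simp
next
  case (step j)
  define W where "W = (\<Sum>m\<in>{Suc j..K}. w m)"
  define sj where "sj = sqrt (real j + 1)"
  define sk where "sk = sqrt (real (Suc j) + 1)"
  have sj_pos: "sj > 0" and sj_le_sk: "sj \<le> sk" and sk_square: "sk * sk = real (Suc j) + 1"
    unfolding sj_def sk_def by auto
  have "W \<ge> 0"
    unfolding W_def by (simp add: sum_nonneg w_nonneg)
  have W_bound: "W * (sk * sk) \<le> A"
    using hardy_bound[of "Suc j"] step.hyps sk_square unfolding W_def by (simp add: mult.commute)
  have "(sk - sj) * (sj * sk) \<le> (sk - sj) * (sk * sk)"
    using sj_le_sk sj_pos by (intro mult_left_mono) auto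
  then have "W * (sk - sj) * (sj * sk) \<le> W * (sk * sk) * (sk - sj)"
    using \<open>W \<ge> 0\<close> by (metis mult_left_mono mult.assoc mult.commute)
  also have "\<dots> \<le> A * (sk - sj)"
    using W_bound sj_le_sk by (simp add: mult_right_mono)
  finally have "W * (sk - sj) \<le> A / sj - A / sk"
    using sj_pos sj_le_sk by (simp add: field_simps)
  moreover have "(\<Sum>n\<in>{j..K}. w n * sqrt (real n + 1))
      = w j * sj + (\<Sum>n\<in>{Suc j..K}. w n * sqrt (real n + 1))"
    using step.hyps by (simp add: sum.atLeast_Suc_atMost sj_def)
  moreover have "(\<Sum>m\<in>{j..K}. w m) = w j + W"
    using step.hyps by (simp add: sum.atLeast_Suc_atMost W_def)
  ultimately show ?case
    using step.IH unfolding W_def sk_def sj_def by (simp add: algebra_simps)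
qed

lemma sum_lower_triangle_swap:
  fixes K :: nat
  shows "(\<Sum>n\<le>K. \<Sum>j\<le>n. F n j) = (\<Sum>j\<le>K. \<Sum>n\<in>{j..K}. F n j)"
proof -
  have "(\<Sum>n\<le>K. \<Sum>j\<le>n. F n j) = (\<Sum>n\<le>K. \<Sum>j | j \<in> {..K} \<and> j \<le> n. F n j)"
    by (intro sum.cong) auto
  also have "\<dots> = (\<Sum>j\<le>K. \<Sum>n | n \<in> {..K} \<and> j \<le> n. F n j)"
    by (rule sum.swap_restrict) auto
  also have "\<dots> = (\<Sum>j\<le>K. \<Sum>n\<in>{j..K}. F n j)"
    by (intro sum.cong) auto
  finally show ?thesis .
qed

lemma hardy_inequality:
  fixes w h :: "nat \<Rightarrow> real"
  assumes w_nonneg: "\<And>n. w n \<ge> 0"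
    and hardy_bound: "\<And>n. n \<le> K \<Longrightarrow> real (n+1) * (\<Sum>m\<in>{n..K}. w m) \<le> A"
  shows "(\<Sum>n\<le>K. w n * (\<Sum>j\<le>n. h j)\<^sup>2) \<le> 4 * A * (\<Sum>j\<le>K. (h j)\<^sup>2)"
proof -
  define c where "c j = sqrt (real j + 1) * (h j)\<^sup>2" for j
  have c_nonneg: "c j \<ge> 0" for j
    unfolding c_def by simp
  have weighted_tail: "2 * (\<Sum>n\<in>{j..K}. w n * sqrt (real n + 1)) \<le> 4 * A / sqrt (real j + 1)"
    if "j \<le> K" for j
  proof -
    define s where "s = sqrt (real j + 1)"
    have "s > 0" "s * s = real j + 1"
      unfolding s_def by simp_all
    have "(\<Sum>m\<in>{j..K}. w m) * (s * s) \<le> A"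
      using hardy_bound[OF that] unfolding \<open>s * s = real j + 1\<close> by (simp add: algebra_simps)
    then have "(\<Sum>m\<in>{j..K}. w m) * s \<le> A / s"
      using \<open>s > 0\<close> by (simp add: field_simps)
    then show ?thesis
      using sum_weight_times_sqrt_le[OF w_nonneg hardy_bound that] unfolding s_def by simp
  qed
  have "(\<Sum>n\<le>K. w n * (\<Sum>j\<le>n. h j)\<^sup>2) \<le> (\<Sum>n\<le>K. w n * (2 * sqrt (real n + 1) * (\<Sum>j\<le>n. c j)))"
    unfolding c_def by (intro sum_mono mult_left_mono square_sum_le_sqrt_weighted w_nonneg)
  also have "\<dots> = (\<Sum>n\<le>K. \<Sum>j\<le>n. c j * (2 * (w n * sqrt (real n + 1))))"
    by (simp add: sum_distrib_left sum_distrib_right algebra_simps)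
  also have "\<dots> = (\<Sum>j\<le>K. c j * (2 * (\<Sum>n\<in>{j..K}. w n * sqrt (real n + 1))))"
    by (simp add: sum_lower_triangle_swap sum_distrib_left)
  also have "\<dots> \<le> (\<Sum>j\<le>K. c j * (4 * A / sqrt (real j + 1)))"
    using weighted_tail by (intro sum_mono mult_left_mono c_nonneg) auto
  also have "\<dots> = 4 * A * (\<Sum>j\<le>K. (h j)\<^sup>2)"
    by (simp add: c_def sum_distrib_left mult_ac)
  finally show ?thesis .
qed

lemma hardy_inequality_tail:
  fixes w :: "nat \<Rightarrow> real" and h :: "nat \<Rightarrow> 'a::real_normed_vector"
  assumes w_nonneg: "\<And>n. w n \<ge> 0"
    and hardy_bound: "\<And>n K. N \<le> n \<Longrightarrow> n \<le> K \<Longrightarrow> real (n+1) * (\<Sum>m\<in>{n..K}. w m) \<le> A"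
  shows "(\<Sum>k\<in>{N..K}. w k * (norm (\<Sum>j\<le>k. h j))\<^sup>2) \<le> 4 * A * (\<Sum>j\<le>K. (norm (h j))\<^sup>2)"
proof -
  define v where "v m = (if N \<le> m then w m else 0)" for m
  have v_nonneg: "v n \<ge> 0" for n
    unfolding v_def by (simp add: w_nonneg)
  have sum_v: "(\<Sum>m\<in>{n..K}. v m) = (\<Sum>m\<in>{max n N..K}. w m)" for n
  proof -
    have "(\<Sum>m\<in>{n..K}. v m) = (\<Sum>m\<in>{n..K} \<inter> {N..}. w m)"
      unfolding v_def by (subst sum.inter_restrict) (auto intro!: sum.cong)
    also have "{n..K} \<inter> {N..} = {max n N..K}"
      by auto
    finally show ?thesis .
  qed
  have "A \<ge> 0"
    using hardy_bound[of N N] w_nonneg[of N] by (simp add: order_trans[rotated])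
  have v_bound: "real (n+1) * (\<Sum>m\<in>{n..K}. v m) \<le> A" if "n \<le> K" for n
  proof (cases "max n N \<le> K")
    case True
    have "real (n+1) * (\<Sum>m\<in>{n..K}. v m) \<le> real (max n N + 1) * (\<Sum>m\<in>{max n N..K}. w m)"
      unfolding sum_v by (intro mult_right_mono sum_nonneg w_nonneg) auto
    also have "\<dots> \<le> A"
      using True by (intro hardy_bound) auto
    finally show ?thesis .
  qed (use \<open>A \<ge> 0\<close> sum_v in simp)
  have "(\<Sum>k\<in>{N..K}. w k * (norm (\<Sum>j\<le>k. h j))\<^sup>2)
      = (\<Sum>k\<in>{..K} \<inter> {N..}. w k * (norm (\<Sum>j\<le>k. h j))\<^sup>2)"
    by (intro sum.cong) auto
  also have "\<dots> = (\<Sum>k\<le>K. v k * (norm (\<Sum>j\<le>k. h j))\<^sup>2)"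
    unfolding v_def by (subst sum.inter_restrict) (auto intro!: sum.cong)
  also have "\<dots> \<le> (\<Sum>k\<le>K. v k * (\<Sum>j\<le>k. norm (h j))\<^sup>2)"
    by (intro sum_mono mult_left_mono v_nonneg power_mono norm_sum) auto
  also have "\<dots> \<le> 4 * A * (\<Sum>j\<le>K. (norm (h j))\<^sup>2)"
    by (rule hardy_inequality[OF v_nonneg v_bound])
  finally show ?thesis .
qed

lemma sum_atMost_if_atLeast:
  fixes f :: "nat \<Rightarrow> 'a::comm_monoid_add"
  shows "(\<Sum>j\<le>n. if m \<le> j then f j else 0) = (\<Sum>j\<in>{m..n}. f j)"
proof -
  have "(\<Sum>j\<le>n. if m \<le> j then f j else 0) = sum f ({..n} \<inter> {m..})"
    by (simp add: sum.inter_restrict)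
  also have "{..n} \<inter> {m..} = {m..n}"
    by auto
  finally show ?thesis .
qed

lemma sum_atMost_if_atMost:
  fixes c :: "'a::semiring_1"
  shows "(\<Sum>j\<le>k. if j \<le> n then c else 0) = of_nat (min k n + 1) * c"
proof -
  have "(\<Sum>j\<le>k. if j \<le> n then c else 0) = (\<Sum>j\<in>{..k} \<inter> {..n}. c)"
    by (subst sum.inter_restrict) simp_all
  also have "{..k} \<inter> {..n} = {..min k n}"
    by auto
  also have "(\<Sum>j\<le>min k n. c) = of_nat (min k n + 1) * c"
    by simp
  finally show ?thesis .
qed

lemma norm_diff_square_le:
  fixes x y :: "'a::real_normed_vector"
  shows "(norm (x - y))\<^sup>2 \<le> 2 * (norm x)\<^sup>2 + 2 * (norm y)\<^sup>2"
proof -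
  have "(norm (x - y))\<^sup>2 \<le> (norm x + norm y)\<^sup>2"
    by (intro power_mono norm_triangle_ineq4) simp
  also have "\<dots> = 2 * (norm x)\<^sup>2 + 2 * (norm y)\<^sup>2 - (norm x - norm y)\<^sup>2"
    by (simp add: power2_eq_square algebra_simps)
  finally show ?thesis
    using zero_le_power2[of "norm x - norm y"] by linarith
qed

lemma in_l2_diff:
  assumes "in_l2 f" "in_l2 g"
  shows "in_l2 (\<lambda>k. f k - g k)"
  unfolding in_l2_def
proof (rule summable_comparison_test)
  show "\<exists>N. \<forall>n\<ge>N. norm ((cmod (f n - g n))\<^sup>2) \<le> 2 * (cmod (f n))\<^sup>2 + 2 * (cmod (g n))\<^sup>2"
    using norm_diff_square_le by auto
  show "summable (\<lambda>k. 2 * (cmod (f k))\<^sup>2 + 2 * (cmod (g k))\<^sup>2)"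
    using assms unfolding in_l2_def by (intro summable_add summable_mult)
qed

lemma l2_norm_nonneg: "in_l2 f \<Longrightarrow> l2_norm f \<ge> 0"
  unfolding l2_norm_def in_l2_def by (simp add: suminf_nonneg)

lemma sum_le_l2_norm_square:
  assumes "in_l2 f" "finite S"
  shows "(\<Sum>k\<in>S. (cmod (f k))\<^sup>2) \<le> (l2_norm f)\<^sup>2"
proof -
  have "(\<Sum>k\<in>S. (cmod (f k))\<^sup>2) \<le> (\<Sum>k. (cmod (f k))\<^sup>2)"
    using assms by (intro sum_le_suminf) (auto simp: in_l2_def)
  also have "\<dots> = (l2_norm f)\<^sup>2"
    using assms(1) unfolding l2_norm_def in_l2_def by (simp add: suminf_nonneg)
  finally show ?thesis .
qed

lemma sum_le_square_if_l2_norm_le: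
  assumes "in_l2 f" "l2_norm f \<le> B" "finite S"
  shows "(\<Sum>k\<in>S. (cmod (f k))\<^sup>2) \<le> B\<^sup>2"
proof -
  have "(\<Sum>k\<in>S. (cmod (f k))\<^sup>2) \<le> (l2_norm f)\<^sup>2"
    using assms(1,3) by (rule sum_le_l2_norm_square)
  also have "\<dots> \<le> B\<^sup>2"
    using assms(1,2) l2_norm_nonneg by (intro power_mono) auto
  finally show ?thesis .
qed

lemma in_l2_bounded_partial_sums:
  assumes "\<And>K. (\<Sum>k\<le>K. (cmod (f k))\<^sup>2) \<le> C"
  shows "in_l2 f" and "l2_norm f \<le> sqrt C"
proof -
  have bounded: "(\<Sum>k<n. (cmod (f k))\<^sup>2) \<le> C" for n
    using assms[of n] sum_mono2[of "{..n}" "{..<n}" "\<lambda>k. (cmod (f k))\<^sup>2"] by force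
  show "in_l2 f"
    unfolding in_l2_def by (rule summableI_nonneg_bounded[OF _ bounded]) auto
  then have "(\<Sum>k. (cmod (f k))\<^sup>2) \<le> C"
    by (intro suminf_le_const[OF _ bounded]) (simp add: in_l2_def)
  then show "l2_norm f \<le> sqrt C"
    unfolding l2_norm_def by simp
qed

subsection \<open>The vanishing Hardy condition\<close>

text \<open>For \<open>\<alpha> \<in> \<ell>\<^sup>2\<close> this says \<open>(n+1) \<Sum>\<^sub>m\<^sub>\<ge>\<^sub>n |\<alpha>\<^sub>m|\<^sup>2 \<rightarrow> 0\<close>; the tail sum is
  written as a supremum of finite sums.\<close>

definition vanishing_hardy_tail :: "(nat \<Rightarrow> complex) \<Rightarrow> bool" where
  "vanishing_hardy_tail \<alpha> \<longleftrightarrow>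
     (\<forall>\<delta>>0. \<exists>N. \<forall>n\<ge>N. \<forall>K\<ge>n. real (n+1) * (\<Sum>m\<in>{n..K}. (cmod (\<alpha> m))\<^sup>2) \<le> \<delta>)"

lemma vanishing_hardy_tailD:
  assumes "vanishing_hardy_tail \<alpha>" "\<delta> > 0"
  obtains N where "\<And>n K. N \<le> n \<Longrightarrow> n \<le> K \<Longrightarrow> real (n+1) * (\<Sum>m\<in>{n..K}. (cmod (\<alpha> m))\<^sup>2) \<le> \<delta>"
  using assms unfolding vanishing_hardy_tail_def by blast

lemma vanishing_hardy_tail_bounded:
  assumes "in_l2 \<alpha>" "vanishing_hardy_tail \<alpha>"
  obtains A where "A \<ge> 0" "\<And>n K. n \<le> K \<Longrightarrow> real (n+1) * (\<Sum>m\<in>{n..K}. (cmod (\<alpha> m))\<^sup>2) \<le> A"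
proof -
  obtain N where N: "\<And>n K. N \<le> n \<Longrightarrow> n \<le> K \<Longrightarrow> real (n+1) * (\<Sum>m\<in>{n..K}. (cmod (\<alpha> m))\<^sup>2) \<le> 1"
    using vanishing_hardy_tailD[OF assms(2), of 1] by auto
  define S where "S = (\<Sum>k. (cmod (\<alpha> k))\<^sup>2)"
  have "S \<ge> 0"
    using assms(1) unfolding S_def in_l2_def by (simp add: suminf_nonneg)
  then have "real (N+1) * S \<ge> 0"
    by simp
  have "real (n+1) * (\<Sum>m\<in>{n..K}. (cmod (\<alpha> m))\<^sup>2) \<le> real (N+1) * S + 1" if "n \<le> K" for n K
  proof (cases "N \<le> n")
    case True
    then show ?thesis
      using N[OF True that] \<open>real (N+1) * S \<ge> 0\<close> by linarith
  next
    case False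
    have "(\<Sum>m\<in>{n..K}. (cmod (\<alpha> m))\<^sup>2) \<le> S"
      unfolding S_def using assms(1) by (intro sum_le_suminf) (auto simp: in_l2_def)
    then have "real (n+1) * (\<Sum>m\<in>{n..K}. (cmod (\<alpha> m))\<^sup>2) \<le> real (N+1) * S"
      using False \<open>S \<ge> 0\<close> by (intro mult_mono) (auto intro: sum_nonneg)
    then show ?thesis
      by linarith
  qed
  moreover have "real (N+1) * S + 1 \<ge> 0"
    using \<open>real (N+1) * S \<ge> 0\<close> by simp
  ultimately show ?thesis
    using that by blast
qed

subsection \<open>The quantity \<open>L\<close> on finite intervals\<close>

definition lI_quotients :: "(nat \<Rightarrow> complex) \<Rightarrow> nat \<Rightarrow> nat \<Rightarrow> real set" where
  "lI_quotients \<alpha> a b =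
     {lI \<alpha> a b f / mu \<alpha> a b | f. (\<forall>k. k \<notin> {a..b} \<longrightarrow> f k = 0) \<and> norm2I a b f \<le> 1}"

lemma LI_eq_sqrt_Sup:
  "LI \<alpha> a b = (if \<forall>k\<in>{a..b}. \<alpha> k = 0 then 0 else sqrt (Sup (lI_quotients \<alpha> a b)))"
  unfolding LI_def lI_quotients_def ..

lemma mu_nonneg: "mu \<alpha> a b \<ge> 0"
  unfolding mu_def by (intro sum_nonneg) auto

lemma mu_pos:
  assumes "k \<in> {a..b}" "\<alpha> k \<noteq> 0"
  shows "mu \<alpha> a b > 0"
proof -
  have "0 < (cmod (\<alpha> k))\<^sup>2"
    using assms(2) by simp
  also have "\<dots> \<le> mu \<alpha> a b"
    unfolding mu_def by (rule member_le_sum[OF assms(1)]) auto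
  finally show ?thesis .
qed

lemma lI_le_crude_bound:
  assumes "\<forall>k. k \<notin> {a..b} \<longrightarrow> f k = 0" "norm2I a b f \<le> 1"
  shows "lI \<alpha> a b f \<le> (\<Sum>k\<in>{a..b}. \<Sum>n\<in>{a..b}-{k}. (cmod (\<alpha> k) * cmod (\<alpha> n) * real (b+1))\<^sup>2)"
proof -
  have f_le_1: "cmod (f j) \<le> 1" for j
  proof (cases "j \<in> {a..b}")
    case True
    have "(cmod (f j))\<^sup>2 \<le> (\<Sum>k\<in>{a..b}. (cmod (f k))\<^sup>2)"
      by (rule member_le_sum[OF True]) auto
    also have "\<dots> \<le> 1"
      using assms(2) unfolding norm2I_def by simp
    finally show ?thesis
      by (simp add: power_le_one_iff abs_le_square_iff)
  qed (use assms(1) in simp)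
  have "cmod (\<Sum>j\<in>{min k n + 1..max k n}. f j) \<le> real (b+1)" if "k \<in> {a..b}" "n \<in> {a..b}" for k n
  proof -
    have "cmod (\<Sum>j\<in>{min k n + 1..max k n}. f j) \<le> real (card {min k n + 1..max k n}) * 1"
      by (rule order_trans[OF norm_sum sum_bounded_above]) (simp add: f_le_1)
    also have "\<dots> \<le> real (b+1)"
      using that by auto
    finally show ?thesis .
  qed
  then show ?thesis
    unfolding lI_def by (intro sum_mono) (auto simp: norm_mult intro!: power_mono mult_left_mono)
qed

lemma bdd_above_lI_quotients: "bdd_above (lI_quotients \<alpha> a b)"
proof (rule bdd_aboveI)
  fix x
  assume "x \<in> lI_quotients \<alpha> a b"
  then obtain f where "x = lI \<alpha> a b f / mu \<alpha> a b"
    and "\<forall>k. k \<notin> {a..b} \<longrightarrow> f k = 0" "norm2I a b f \<le> 1"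
    unfolding lI_quotients_def by blast
  then show "x \<le> (\<Sum>k\<in>{a..b}. \<Sum>n\<in>{a..b}-{k}. (cmod (\<alpha> k) * cmod (\<alpha> n) * real (b+1))\<^sup>2) / mu \<alpha> a b"
    using lI_le_crude_bound mu_nonneg by (simp add: divide_right_mono)
qed

lemma lI_quotient_le_Sup:
  assumes "\<forall>k. k \<notin> {a..b} \<longrightarrow> f k = 0" "norm2I a b f \<le> 1"
  shows "lI \<alpha> a b f / mu \<alpha> a b \<le> Sup (lI_quotients \<alpha> a b)"
  using assms by (intro cSup_upper bdd_above_lI_quotients) (auto simp: lI_quotients_def)

lemma Sup_lI_quotients_nonneg: "Sup (lI_quotients \<alpha> a b) \<ge> 0"
  using lI_quotient_le_Sup[of a b "\<lambda>_. 0" \<alpha>] by (simp add: lI_def norm2I_def)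

lemma LI_nonneg: "LI \<alpha> a b \<ge> 0"
  unfolding LI_eq_sqrt_Sup using Sup_lI_quotients_nonneg[of \<alpha> a b] by auto

lemma lI_le_LI_square:
  assumes "\<forall>k. k \<notin> {a..b} \<longrightarrow> f k = 0" "norm2I a b f \<le> 1"
  shows "lI \<alpha> a b f \<le> (LI \<alpha> a b)\<^sup>2 * mu \<alpha> a b"
proof (cases "\<forall>k\<in>{a..b}. \<alpha> k = 0")
  case True
  then have "lI \<alpha> a b f = 0"
    unfolding lI_def by (intro sum.neutral ballI) auto
  then show ?thesis
    using mu_nonneg by simp
next
  case False
  then obtain k where "k \<in> {a..b}" "\<alpha> k \<noteq> 0"
    by blast
  then have "mu \<alpha> a b > 0"
    by (rule mu_pos)
  moreover have "LI \<alpha> a b = sqrt (Sup (lI_quotients \<alpha> a b))"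
    unfolding LI_eq_sqrt_Sup using False by (rule if_not_P)
  then have "(LI \<alpha> a b)\<^sup>2 = Sup (lI_quotients \<alpha> a b)"
    using Sup_lI_quotients_nonneg by simp
  ultimately show ?thesis
    using lI_quotient_le_Sup[OF assms, of \<alpha>] by (simp add: pos_divide_le_eq)
qed

lemma LI_leI:
  assumes "\<epsilon> \<ge> 0"
    and "\<And>f. \<forall>k. k \<notin> {a..b} \<longrightarrow> f k = 0 \<Longrightarrow> norm2I a b f \<le> 1 \<Longrightarrow> lI \<alpha> a b f \<le> \<epsilon>\<^sup>2 * mu \<alpha> a b"
  shows "LI \<alpha> a b \<le> \<epsilon>"
proof (cases "\<forall>k\<in>{a..b}. \<alpha> k = 0")
  case False
  then obtain k where "k \<in> {a..b}" "\<alpha> k \<noteq> 0"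
    by blast
  then have "mu \<alpha> a b > 0"
    by (rule mu_pos)
  then have "Sup (lI_quotients \<alpha> a b) \<le> \<epsilon>\<^sup>2"
    using assms(2) unfolding lI_quotients_def
    by (intro cSup_least) (auto simp: pos_divide_le_eq norm2I_def)
  then have "sqrt (Sup (lI_quotients \<alpha> a b)) \<le> sqrt (\<epsilon>\<^sup>2)"
    by (rule real_sqrt_le_mono)
  then show ?thesis
    using False assms(1) by (simp add: LI_eq_sqrt_Sup)
qed (simp add: LI_eq_sqrt_Sup assms(1))

lemma LI_singleton: "LI \<alpha> a a = 0"
  using LI_leI[of 0 a a \<alpha>] LI_nonneg[of \<alpha> a a] by (simp add: lI_def)

lemma lI_eq_twice_upper_sum:
  "lI \<alpha> a b f = 2 * (\<Sum>k\<in>{a..b}. (cmod (\<alpha> k))\<^sup>2 *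
      (\<Sum>n\<in>{Suc k..b}. (cmod (\<alpha> n))\<^sup>2 * (cmod (\<Sum>j\<in>{Suc k..n}. f j))\<^sup>2))"
proof -
  define I where "I = {a..b}"
  define G where "G k n = (cmod (\<alpha> k * \<alpha> n * (\<Sum>j\<in>{min k n + 1..max k n}. f j)))\<^sup>2" for k n
  have G_sym: "G k n = G n k" for k n
    unfolding G_def by (simp add: min.commute max.commute mult.commute)
  have split: "(\<Sum>n\<in>I-{k}. G k n) = (\<Sum>n | n \<in> I \<and> k < n. G k n) + (\<Sum>n | n \<in> I \<and> n < k. G k n)" for k
  proof -
    have "I - {k} = {n. n \<in> I \<and> k < n} \<union> {n. n \<in> I \<and> n < k}"
      "{n. n \<in> I \<and> k < n} \<inter> {n. n \<in> I \<and> n < k} = {}"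
      by auto
    then show ?thesis
      unfolding I_def by (simp add: sum.union_disjoint)
  qed
  have "(\<Sum>k\<in>I. \<Sum>n | n \<in> I \<and> n < k. G k n) = (\<Sum>n\<in>I. \<Sum>k | k \<in> I \<and> n < k. G k n)"
    unfolding I_def by (rule sum.swap_restrict) simp_all
  then have lower_eq_upper: "(\<Sum>k\<in>I. \<Sum>n | n \<in> I \<and> n < k. G k n) = (\<Sum>k\<in>I. \<Sum>n | n \<in> I \<and> k < n. G k n)"
    by (simp add: G_sym)
  have upper: "(\<Sum>n | n \<in> I \<and> k < n. G k n)
      = (cmod (\<alpha> k))\<^sup>2 * (\<Sum>n\<in>{Suc k..b}. (cmod (\<alpha> n))\<^sup>2 * (cmod (\<Sum>j\<in>{Suc k..n}. f j))\<^sup>2)"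
    if "k \<in> I" for k
  proof -
    have "{n. n \<in> I \<and> k < n} = {Suc k..b}"
      using that unfolding I_def by auto
    then have "(\<Sum>n | n \<in> I \<and> k < n. G k n)
        = (\<Sum>n\<in>{Suc k..b}. (cmod (\<alpha> k))\<^sup>2 * ((cmod (\<alpha> n))\<^sup>2 * (cmod (\<Sum>j\<in>{Suc k..n}. f j))\<^sup>2))"
      unfolding G_def by (intro sum.cong) (auto simp: norm_mult power_mult_distrib min_def max_def)
    then show ?thesis
      by (simp add: sum_distrib_left)
  qed
  have "lI \<alpha> a b f = (\<Sum>k\<in>I. \<Sum>n\<in>I-{k}. G k n)"
    unfolding lI_def G_def I_def ..
  also have "\<dots> = 2 * (\<Sum>k\<in>I. \<Sum>n | n \<in> I \<and> k < n. G k n)"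
    unfolding split sum.distrib lower_eq_upper by simp
  also have "\<dots> = 2 * (\<Sum>k\<in>I. (cmod (\<alpha> k))\<^sup>2 *
      (\<Sum>n\<in>{Suc k..b}. (cmod (\<alpha> n))\<^sup>2 * (cmod (\<Sum>j\<in>{Suc k..n}. f j))\<^sup>2))"
    using upper by simp
  finally show ?thesis
    unfolding I_def .
qed

lemma lI_le_hardy_bound:
  assumes hardy_bound: "\<And>n K. a \<le> n \<Longrightarrow> n \<le> K \<Longrightarrow> real (n+1) * (\<Sum>m\<in>{n..K}. (cmod (\<alpha> m))\<^sup>2) \<le> A"
  shows "lI \<alpha> a b f \<le> 8 * A * mu \<alpha> a b * (\<Sum>j\<in>{a..b}. (cmod (f j))\<^sup>2)"
proof -
  define F where "F = (\<Sum>j\<in>{a..b}. (cmod (f j))\<^sup>2)"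
  have "0 \<le> real (a+1) * (\<Sum>m\<in>{a..a}. (cmod (\<alpha> m))\<^sup>2)"
    by simp
  then have "A \<ge> 0"
    using hardy_bound[of a a] by linarith
  have inner: "(\<Sum>n\<in>{Suc k..b}. (cmod (\<alpha> n))\<^sup>2 * (cmod (\<Sum>j\<in>{Suc k..n}. f j))\<^sup>2) \<le> 4 * A * F"
    if "k \<in> {a..b}" for k
  proof -
    define h where "h j = (if Suc k \<le> j then f j else 0)" for j
    have "(\<Sum>n\<in>{Suc k..b}. (cmod (\<alpha> n))\<^sup>2 * (cmod (\<Sum>j\<in>{Suc k..n}. f j))\<^sup>2)
        = (\<Sum>n\<in>{Suc k..b}. (cmod (\<alpha> n))\<^sup>2 * (norm (\<Sum>j\<le>n. h j))\<^sup>2)"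
      unfolding h_def sum_atMost_if_atLeast ..
    also have "\<dots> \<le> 4 * A * (\<Sum>j\<le>b. (norm (h j))\<^sup>2)"
      using hardy_bound that by (intro hardy_inequality_tail) auto
    also have "(\<Sum>j\<le>b. (norm (h j))\<^sup>2) = (\<Sum>j\<le>b. if Suc k \<le> j then (cmod (f j))\<^sup>2 else 0)"
      by (intro sum.cong) (auto simp: h_def)
    also have "\<dots> \<le> F"
      unfolding sum_atMost_if_atLeast F_def using that by (intro sum_mono2) auto
    finally show ?thesis
      using \<open>A \<ge> 0\<close> by (simp add: mult_left_mono)
  qed
  have "lI \<alpha> a b f \<le> 2 * (\<Sum>k\<in>{a..b}. (cmod (\<alpha> k))\<^sup>2 * (4 * A * F))"
    unfolding lI_eq_twice_upper_sum using inner by (intro mult_left_mono sum_mono) auto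
  also have "\<dots> = 8 * A * mu \<alpha> a b * F"
    unfolding mu_def by (simp add: sum_distrib_left sum_distrib_right mult_ac)
  finally show ?thesis
    unfolding F_def .
qed

definition dyadic_block :: "nat \<Rightarrow> nat \<Rightarrow> complex" where
  "dyadic_block p j = (if j \<in> {Suc p..2*p} then of_real (1 / sqrt (real p)) else 0)"

lemma norm2I_dyadic_block:
  assumes "1 \<le> p" "a \<le> p" "2*p \<le> b"
  shows "norm2I a b (dyadic_block p) = 1"
proof -
  have "(\<Sum>j\<in>{a..b}. (cmod (dyadic_block p j))\<^sup>2) = (\<Sum>j\<in>{a..b} \<inter> {Suc p..2*p}. 1 / real p)"
    unfolding dyadic_block_def by (subst sum.inter_restrict) (auto intro!: sum.cong simp: power_divide norm_divide)
  also have "{a..b} \<inter> {Suc p..2*p} = {Suc p..2*p}"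
    using assms by auto
  finally show ?thesis
    using assms(1) unfolding norm2I_def by simp
qed

lemma sum_dyadic_block:
  assumes "k \<le> p" "2*p \<le> n"
  shows "(\<Sum>j\<in>{Suc k..n}. dyadic_block p j) = of_real (sqrt (real p))"
proof -
  have "(\<Sum>j\<in>{Suc k..n}. dyadic_block p j) = (\<Sum>j\<in>{Suc k..n} \<inter> {Suc p..2*p}. of_real (1 / sqrt (real p)))"
    unfolding dyadic_block_def by (subst sum.inter_restrict) auto
  also have "{Suc k..n} \<inter> {Suc p..2*p} = {Suc p..2*p}"
    using assms by auto
  also have "(\<Sum>j\<in>{Suc p..2*p}. of_real (1 / sqrt (real p))) = (of_real (real p / sqrt (real p)) :: complex)"
    by simp
  also have "real p / sqrt (real p) = sqrt (real p)"
    by (rule real_div_sqrt) simp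
  finally show ?thesis .
qed

lemma LI_square_lower_bound:
  assumes "1 \<le> p" "a \<le> p" "2*p \<le> b"
  shows "real p * mu \<alpha> a p * (\<Sum>n\<in>{2*p..b}. (cmod (\<alpha> n))\<^sup>2) \<le> (LI \<alpha> a b)\<^sup>2 * mu \<alpha> a b"
proof -
  define S where "S = (\<Sum>n\<in>{2*p..b}. (cmod (\<alpha> n))\<^sup>2)"
  define U where "U k = (\<Sum>n\<in>{Suc k..b}. (cmod (\<alpha> n))\<^sup>2 * (cmod (\<Sum>j\<in>{Suc k..n}. dyadic_block p j))\<^sup>2)"
    for k
  have U_nonneg: "U k \<ge> 0" for k
    unfolding U_def by (intro sum_nonneg) simp
  have U_ge: "real p * S \<le> U k" if "k \<le> p" for k
  proof -
    have "real p * S = (\<Sum>n\<in>{2*p..b}. (cmod (\<alpha> n))\<^sup>2 * (cmod (\<Sum>j\<in>{Suc k..n}. dyadic_block p j))\<^sup>2)"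
      unfolding S_def sum_distrib_left using that by (intro sum.cong) (auto simp: sum_dyadic_block)
    also have "\<dots> \<le> U k"
      unfolding U_def using that assms(1) by (intro sum_mono2) auto
    finally show ?thesis .
  qed
  have "real p * mu \<alpha> a p * S = (\<Sum>k\<in>{a..p}. (cmod (\<alpha> k))\<^sup>2) * (real p * S)"
    unfolding mu_def by (simp only: mult_ac)
  also have "\<dots> \<le> (\<Sum>k\<in>{a..p}. (cmod (\<alpha> k))\<^sup>2 * U k)"
    unfolding sum_distrib_right using U_ge by (intro sum_mono mult_left_mono) auto
  also have "\<dots> \<le> (\<Sum>k\<in>{a..b}. (cmod (\<alpha> k))\<^sup>2 * U k)"
    using assms U_nonneg by (intro sum_mono2) auto
  also have "\<dots> \<le> lI \<alpha> a b (dyadic_block p)"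
    unfolding lI_eq_twice_upper_sum U_def[symmetric] using U_nonneg by (simp add: sum_nonneg)
  also have "\<dots> \<le> (LI \<alpha> a b)\<^sup>2 * mu \<alpha> a b"
    using norm2I_dyadic_block[OF assms] assms by (intro lI_le_LI_square) (auto simp: dyadic_block_def)
  finally show ?thesis
    unfolding S_def .
qed

lemma LI_uniformly_small:
  assumes "vanishing_hardy_tail \<alpha>" "\<epsilon> > 0"
  shows "\<exists>N. \<forall>a\<ge>N. \<forall>b. LI \<alpha> a b \<le> \<epsilon>"
proof -
  obtain N where N: "\<And>n K. N \<le> n \<Longrightarrow> n \<le> K \<Longrightarrow> real (n+1) * (\<Sum>m\<in>{n..K}. (cmod (\<alpha> m))\<^sup>2) \<le> \<epsilon>\<^sup>2 / 8"
    using vanishing_hardy_tailD[OF assms(1), of "\<epsilon>\<^sup>2 / 8"] assms(2) by auto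
  have "LI \<alpha> a b \<le> \<epsilon>" if "N \<le> a" for a b
  proof (rule LI_leI)
    fix f
    assume "norm2I a b f \<le> 1"
    then have "(\<Sum>j\<in>{a..b}. (cmod (f j))\<^sup>2) \<le> 1"
      unfolding norm2I_def by simp
    then have "\<epsilon>\<^sup>2 * mu \<alpha> a b * (\<Sum>j\<in>{a..b}. (cmod (f j))\<^sup>2) \<le> \<epsilon>\<^sup>2 * mu \<alpha> a b"
      by (intro mult_left_le) (simp_all add: mu_nonneg)
    moreover have "lI \<alpha> a b f \<le> 8 * (\<epsilon>\<^sup>2 / 8) * mu \<alpha> a b * (\<Sum>j\<in>{a..b}. (cmod (f j))\<^sup>2)"
      using N that by (intro lI_le_hardy_bound) auto
    ultimately show "lI \<alpha> a b f \<le> \<epsilon>\<^sup>2 * mu \<alpha> a b"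
      by simp
  qed (use assms(2) in simp)
  then show ?thesis
    by blast
qed

lemma mu_eventually_doubling:
  assumes "in_l2 \<alpha>" "a \<le> q" "\<alpha> q \<noteq> 0"
  obtains M where "q \<le> M" "\<And>p b. M \<le> p \<Longrightarrow> p \<le> b \<Longrightarrow> mu \<alpha> a b \<le> 2 * mu \<alpha> a p"
proof -
  define \<eta> where "\<eta> = (cmod (\<alpha> q))\<^sup>2"
  have "\<eta> > 0"
    unfolding \<eta>_def using assms(3) by simp
  then obtain M where M: "\<And>m n. M \<le> m \<Longrightarrow> norm (\<Sum>k\<in>{m..<n}. (cmod (\<alpha> k))\<^sup>2) < \<eta>"
    using assms(1) unfolding in_l2_def summable_Cauchy by blast
  have "mu \<alpha> a b \<le> 2 * mu \<alpha> a p" if "max q M \<le> p" "p \<le> b" for p b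
  proof -
    have "\<eta> \<le> mu \<alpha> a p"
      unfolding mu_def \<eta>_def using assms(2) that by (intro member_le_sum) auto
    moreover have "{a..b} = {a..p} \<union> {Suc p..<Suc b}" "{a..p} \<inter> {Suc p..<Suc b} = {}"
      using assms(2) that by auto
    then have "mu \<alpha> a b = mu \<alpha> a p + (\<Sum>k\<in>{Suc p..<Suc b}. (cmod (\<alpha> k))\<^sup>2)"
      unfolding mu_def by (simp add: sum.union_disjoint)
    moreover have "(\<Sum>k\<in>{Suc p..<Suc b}. (cmod (\<alpha> k))\<^sup>2) < \<eta>"
      using M[of "Suc p" "Suc b"] that by simp
    ultimately show ?thesis
      by linarith
  qed
  then show ?thesis
    using that[of "max q M"] by simp
qed

lemma dyadic_tail_bound_if_LI_bounded:
  assumes "in_l2 \<alpha>" and LI_bound: "\<And>b. a \<le> b \<Longrightarrow> LI \<alpha> a b \<le> \<epsilon>"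
  obtains P where "1 \<le> P" "\<And>p b. P \<le> p \<Longrightarrow> 2*p \<le> b \<Longrightarrow> real p * (\<Sum>n\<in>{2*p..b}. (cmod (\<alpha> n))\<^sup>2) \<le> 2 * \<epsilon>\<^sup>2"
proof (cases "\<forall>k\<ge>a. \<alpha> k = 0")
  case True
  then have "(\<Sum>n\<in>{2*p..b}. (cmod (\<alpha> n))\<^sup>2) = 0" if "max 1 a \<le> p" for p b
    using that by (intro sum.neutral) auto
  then show ?thesis
    using that[of "max 1 a"] by simp
next
  case False
  then obtain q where "a \<le> q" "\<alpha> q \<noteq> 0"
    by auto
  then obtain M where "q \<le> M" and doubling: "\<And>p b. M \<le> p \<Longrightarrow> p \<le> b \<Longrightarrow> mu \<alpha> a b \<le> 2 * mu \<alpha> a p"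
    using mu_eventually_doubling[OF assms(1)] by blast
  have "real p * (\<Sum>n\<in>{2*p..b}. (cmod (\<alpha> n))\<^sup>2) \<le> 2 * \<epsilon>\<^sup>2" if "max 1 M \<le> p" "2*p \<le> b" for p b
  proof -
    have "mu \<alpha> a p > 0"
      using \<open>a \<le> q\<close> \<open>q \<le> M\<close> \<open>\<alpha> q \<noteq> 0\<close> that by (intro mu_pos[of q]) auto
    have "real p * (\<Sum>n\<in>{2*p..b}. (cmod (\<alpha> n))\<^sup>2) * mu \<alpha> a p \<le> (LI \<alpha> a b)\<^sup>2 * mu \<alpha> a b"
      using LI_square_lower_bound[of p a b \<alpha>] that \<open>a \<le> q\<close> \<open>q \<le> M\<close> by (simp add: mult_ac)
    also have "\<dots> \<le> \<epsilon>\<^sup>2 * (2 * mu \<alpha> a p)"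
      using LI_bound[of b] LI_nonneg[of \<alpha> a b] doubling[of p b] mu_nonneg[of \<alpha> a b] that \<open>a \<le> q\<close> \<open>q \<le> M\<close>
      by (intro mult_mono power_mono) auto
    finally show ?thesis
      using \<open>mu \<alpha> a p > 0\<close> by (simp add: mult_ac)
  qed
  then show ?thesis
    using that[of "max 1 M"] by simp
qed

lemma LI_small_imp_vanishing_hardy_tail:
  assumes "in_l2 \<alpha>" and LI_small: "\<And>\<epsilon>. \<epsilon> > 0 \<Longrightarrow> \<exists>a. \<forall>b\<ge>a. LI \<alpha> a b \<le> \<epsilon>"
  shows "vanishing_hardy_tail \<alpha>"
  unfolding vanishing_hardy_tail_def
proof (intro allI impI)
  fix \<delta> :: real
  assume "\<delta> > 0"
  define \<epsilon> where "\<epsilon> = sqrt (\<delta> / 8)"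
  have "\<epsilon> > 0" "2 * \<epsilon>\<^sup>2 = \<delta> / 4"
    unfolding \<epsilon>_def using \<open>\<delta> > 0\<close> by simp_all
  then obtain a where "\<And>b. a \<le> b \<Longrightarrow> LI \<alpha> a b \<le> \<epsilon>"
    using LI_small by blast
  then obtain P where "1 \<le> P"
    and P: "\<And>p b. P \<le> p \<Longrightarrow> 2*p \<le> b \<Longrightarrow> real p * (\<Sum>n\<in>{2*p..b}. (cmod (\<alpha> n))\<^sup>2) \<le> \<delta> / 4"
    using dyadic_tail_bound_if_LI_bounded[OF assms(1)] \<open>2 * \<epsilon>\<^sup>2 = \<delta> / 4\<close> by metis
  have "real (n+1) * (\<Sum>m\<in>{n..K}. (cmod (\<alpha> m))\<^sup>2) \<le> \<delta>" if "2*P \<le> n" "n \<le> K" for n K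
  proof -
    define p where "p = n div 2"
    have "P \<le> p" "2*p \<le> n" "n + 1 \<le> 4 * p"
      unfolding p_def using that \<open>1 \<le> P\<close> by presburger+
    have "real (n+1) * (\<Sum>m\<in>{n..K}. (cmod (\<alpha> m))\<^sup>2) \<le> 4 * (real p * (\<Sum>m\<in>{2*p..K}. (cmod (\<alpha> m))\<^sup>2))"
    proof -
      have "(\<Sum>m\<in>{n..K}. (cmod (\<alpha> m))\<^sup>2) \<le> (\<Sum>m\<in>{2*p..K}. (cmod (\<alpha> m))\<^sup>2)"
        using \<open>2*p \<le> n\<close> by (intro sum_mono2) auto
      moreover have "real (n+1) \<le> 4 * real p"
        using \<open>n + 1 \<le> 4 * p\<close> by linarith
      ultimately show ?thesis
        by (simp add: mult_mono sum_nonneg mult.assoc[symmetric])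
    qed
    also have "\<dots> \<le> \<delta>"
      using P[of p K] \<open>P \<le> p\<close> \<open>2*p \<le> n\<close> that by simp
    finally show ?thesis .
  qed
  then show "\<exists>N. \<forall>n\<ge>N. \<forall>K\<ge>n. real (n+1) * (\<Sum>m\<in>{n..K}. (cmod (\<alpha> m))\<^sup>2) \<le> \<delta>"
    by blast
qed

subsection \<open>\<open>L\<close> on tails and \<open>(\<epsilon>,L)\<close>-sequences\<close>

lemma Ltail_nonneg: "Ltail \<alpha> a \<ge> 0"
proof -
  have "ereal (LI \<alpha> a a) \<le> Ltail \<alpha> a"
    unfolding Ltail_def by (rule SUP_upper) simp
  then show ?thesis
    by (simp add: LI_singleton zero_ereal_def)
qed

lemma Ltail_tendsto_zeroI:
  assumes LI_small: "\<And>\<epsilon>. \<epsilon> > 0 \<Longrightarrow> \<exists>N. \<forall>a\<ge>N. \<forall>b. LI \<alpha> a b \<le> \<epsilon>"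
  shows "Ltail \<alpha> \<longlonglongrightarrow> 0"
proof (rule order_tendstoI)
  fix y :: ereal
  assume "y < 0"
  then show "\<forall>\<^sub>F n in sequentially. y < Ltail \<alpha> n"
    using Ltail_nonneg by (intro always_eventually allI) (rule less_le_trans)
next
  fix y :: ereal
  assume "0 < y"
  then obtain z where "0 < z" "ereal z < y"
    using ereal_dense2 by force
  then obtain N where N: "\<And>a b. N \<le> a \<Longrightarrow> LI \<alpha> a b \<le> z"
    using LI_small[of z] by auto
  have "Ltail \<alpha> a < y" if "N \<le> a" for a
  proof -
    have "Ltail \<alpha> a \<le> ereal z"
      unfolding Ltail_def using N that by (intro SUP_least) auto
    then show ?thesis
      using \<open>ereal z < y\<close> by (rule le_less_trans)
  qed
  then show "\<forall>\<^sub>F n in sequentially. Ltail \<alpha> n < y"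
    unfolding eventually_sequentially by blast
qed

lemma Ltail_tendsto_zeroD:
  assumes "Ltail \<alpha> \<longlonglongrightarrow> 0" "\<epsilon> > 0"
  shows "\<exists>a. \<forall>b\<ge>a. LI \<alpha> a b \<le> \<epsilon>"
proof -
  obtain a where "Ltail \<alpha> a < ereal \<epsilon>"
    using order_tendstoD(2)[OF assms(1), of "ereal \<epsilon>"] assms(2) eventually_sequentially by auto
  moreover have "ereal (LI \<alpha> a b) \<le> Ltail \<alpha> a" if "a \<le> b" for b
    unfolding Ltail_def using that by (intro SUP_upper) auto
  ultimately have "LI \<alpha> a b \<le> \<epsilon>" if "a \<le> b" for b
    using that by (meson ereal_less_eq(3) le_less_trans less_imp_le)
  then show ?thesis
    by blast
qed

lemma eps_L_seq_SucE:
  assumes "eps_L_seq \<alpha> \<epsilon> N = enat c" "eps_L_seq \<alpha> \<epsilon> (Suc N) \<noteq> \<infinity>"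
  obtains c' where "eps_L_seq \<alpha> \<epsilon> (Suc N) = enat c'" "c < c'" "LI \<alpha> c (c' - 1) > \<epsilon>"
proof -
  have ex: "\<exists>t. c < t \<and> LI \<alpha> c (t - 1) > \<epsilon>"
    using assms by (auto split: if_splits)
  define c' where "c' = (LEAST t. c < t \<and> LI \<alpha> c (t - 1) > \<epsilon>)"
  have "eps_L_seq \<alpha> \<epsilon> (Suc N) = enat c'"
    using assms ex unfolding c'_def by simp
  moreover have "c < c' \<and> LI \<alpha> c (c' - 1) > \<epsilon>"
    unfolding c'_def using ex by (rule LeastI_ex)
  ultimately show ?thesis
    using that by blast
qed

text \<open>An infinite \<open>(\<epsilon>,L)\<close>-sequence has \<open>c\<^sub>N \<ge> N\<close> and \<open>L([c\<^sub>N, c\<^sub>N\<^sub>+\<^sub>1 - 1]) > \<epsilon>\<close> for every \<open>N\<close>.\<close>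

lemma finite_lengthI:
  assumes LI_small: "\<And>a b. N \<le> a \<Longrightarrow> LI \<alpha> a b \<le> \<epsilon>"
  shows "finite_length \<alpha> \<epsilon>"
proof (rule ccontr)
  assume "\<not> finite_length \<alpha> \<epsilon>"
  then have "eps_L_seq \<alpha> \<epsilon> n \<noteq> \<infinity> \<Longrightarrow> eps_L_seq \<alpha> \<epsilon> (Suc n) \<noteq> \<infinity>" for n
    unfolding finite_length_def by metis
  then have finite: "eps_L_seq \<alpha> \<epsilon> n \<noteq> \<infinity>" for n
    by (induction n) auto
  define c where "c n = the_enat (eps_L_seq \<alpha> \<epsilon> n)" for n
  have c_eq: "eps_L_seq \<alpha> \<epsilon> n = enat (c n)" for n
    using finite[of n] unfolding c_def by auto
  have c_step: "c n < c (Suc n) \<and> LI \<alpha> (c n) (c (Suc n) - 1) > \<epsilon>" for n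
    using eps_L_seq_SucE[OF c_eq[of n] finite[of "Suc n"]] c_eq[of "Suc n"] by auto
  have "n \<le> c n" for n
    using c_step by (induction n) (auto simp: Suc_le_eq le_less_trans)
  then show False
    using LI_small[of "c N" "c (Suc N) - 1"] c_step[of N] by simp
qed

lemma finite_lengthD:
  assumes "finite_length \<alpha> \<epsilon>"
  shows "\<exists>a. \<forall>b\<ge>a. LI \<alpha> a b \<le> \<epsilon>"
proof -
  obtain N c where "eps_L_seq \<alpha> \<epsilon> N = enat c" "eps_L_seq \<alpha> \<epsilon> (Suc N) = \<infinity>"
    using assms unfolding finite_length_def by (metis enat.exhaust)
  then have "\<not> (\<exists>t. c < t \<and> LI \<alpha> c (t - 1) > \<epsilon>)"
    by (auto split: if_splits)
  then have "LI \<alpha> c b \<le> \<epsilon>" if "c \<le> b" for b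
    using that by (metis add_diff_cancel_right' le_imp_less_Suc not_le Suc_eq_plus1)
  then show ?thesis
    by blast
qed

subsection \<open>Compactness of \<open>R\<^sub>\<alpha>\<close>\<close>

lemma R_op_diff: "R_op \<alpha> f k - R_op \<alpha> g k = R_op \<alpha> (\<lambda>j. f j - g j) k"
  unfolding R_op_def by (simp add: sum_subtractf right_diff_distrib)

lemma sum_R_op_square_le:
  assumes "\<And>n K. N \<le> n \<Longrightarrow> n \<le> K \<Longrightarrow> real (n+1) * (\<Sum>m\<in>{n..K}. (cmod (\<alpha> m))\<^sup>2) \<le> A"
  shows "(\<Sum>k\<le>K. (cmod (R_op \<alpha> f k))\<^sup>2)
    \<le> (\<Sum>k<N. (cmod (R_op \<alpha> f k))\<^sup>2) + 4 * A * (\<Sum>j\<le>K. (cmod (f j))\<^sup>2)"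
proof -
  have "(\<Sum>k\<le>K. (cmod (R_op \<alpha> f k))\<^sup>2) \<le> (\<Sum>k\<in>{..<N} \<union> {N..K}. (cmod (R_op \<alpha> f k))\<^sup>2)"
    by (intro sum_mono2) auto
  also have "\<dots> = (\<Sum>k<N. (cmod (R_op \<alpha> f k))\<^sup>2) + (\<Sum>k\<in>{N..K}. (cmod (\<alpha> k))\<^sup>2 * (norm (\<Sum>j\<le>k. f j))\<^sup>2)"
    unfolding R_op_def by (subst sum.union_disjoint) (auto simp: norm_mult power_mult_distrib)
  also have "\<dots> \<le> (\<Sum>k<N. (cmod (R_op \<alpha> f k))\<^sup>2) + 4 * A * (\<Sum>j\<le>K. (norm (f j))\<^sup>2)"
    using assms by (intro add_left_mono hardy_inequality_tail) auto
  finally show ?thesis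
    by simp
qed

lemma in_l2_R_op:
  assumes "in_l2 \<alpha>" "vanishing_hardy_tail \<alpha>" "in_l2 f"
  shows "in_l2 (R_op \<alpha> f)"
proof -
  obtain A where "A \<ge> 0" and A: "\<And>n K. n \<le> K \<Longrightarrow> real (n+1) * (\<Sum>m\<in>{n..K}. (cmod (\<alpha> m))\<^sup>2) \<le> A"
    using vanishing_hardy_tail_bounded[OF assms(1,2)] by blast
  have "(\<Sum>k\<le>K. (cmod (R_op \<alpha> f k))\<^sup>2) \<le> 4 * A * (l2_norm f)\<^sup>2" for K
  proof -
    have "(\<Sum>k\<le>K. (cmod (R_op \<alpha> f k))\<^sup>2) \<le> (\<Sum>k<0. (cmod (R_op \<alpha> f k))\<^sup>2) + 4 * A * (\<Sum>j\<le>K. (cmod (f j))\<^sup>2)"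
      by (rule sum_R_op_square_le) (use A in auto)
    also have "\<dots> \<le> 4 * A * (l2_norm f)\<^sup>2"
      using \<open>A \<ge> 0\<close> sum_le_l2_norm_square[OF assms(3), of "{..K}"] by (simp add: mult_left_mono)
    finally show ?thesis .
  qed
  then show ?thesis
    by (rule in_l2_bounded_partial_sums)
qed

lemma diagonal_coordinatewise_convergent_subseq:
  fixes u :: "nat \<Rightarrow> nat \<Rightarrow> 'a::heine_borel"
  assumes "\<And>j. bounded (range (\<lambda>n. u n j))"
  obtains r where "strict_mono r" "\<And>j. convergent (\<lambda>i. u (r i) j)"
proof -
  interpret subseqs "\<lambda>j s. convergent (\<lambda>i. u (s i) j)"
  proof
    fix j :: nat and s :: "nat \<Rightarrow> nat"
    have "bounded (range (\<lambda>i. u (s i) j))"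
      using assms[of j] by (rule bounded_subset) auto
    then obtain l r' where "strict_mono r'" "((\<lambda>i. u (s i) j) \<circ> r') \<longlonglongrightarrow> l"
      using bounded_imp_convergent_subsequence by blast
    then show "\<exists>r'. strict_mono r' \<and> convergent (\<lambda>i. u ((s \<circ> r') i) j)"
      unfolding convergent_def o_def by blast
  qed
  have "convergent (\<lambda>i. u (diagseq i) j)" for j
  proof -
    have "convergent (\<lambda>i. u ((diagseq \<circ> (+) (Suc j)) i) j)"
    proof (rule diagseq_holds)
      fix r s :: "nat \<Rightarrow> nat" and n
      assume "strict_mono r" "convergent (\<lambda>i. u (s i) n)"
      then show "convergent (\<lambda>i. u ((s \<circ> r) i) n)"
        using convergent_subseq_convergent unfolding o_def by blast
    qed
    then obtain l where "(\<lambda>i. u (diagseq (i + Suc j)) j) \<longlonglongrightarrow> l"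
      unfolding o_def convergent_def by (auto simp: add.commute)
    then show ?thesis
      unfolding convergent_def by (blast intro: LIMSEQ_offset)
  qed
  then show ?thesis
    by (rule that[OF subseq_diagseq])
qed

lemma l2_bounded_coordinatewise_convergent_subseq:
  fixes u :: "nat \<Rightarrow> nat \<Rightarrow> complex"
  assumes "\<And>n. in_l2 (u n)" "\<And>n. l2_norm (u n) \<le> B"
  obtains r v where "strict_mono r" "\<And>j. (\<lambda>i. u (r i) j) \<longlonglongrightarrow> v j"
    "\<And>K. (\<Sum>j\<le>K. (cmod (v j))\<^sup>2) \<le> B\<^sup>2"
proof -
  have partial: "(\<Sum>j\<in>S. (cmod (u n j))\<^sup>2) \<le> B\<^sup>2" if "finite S" for n S
    using assms that by (rule sum_le_square_if_l2_norm_le)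
  have "B \<ge> 0"
    using l2_norm_nonneg[OF assms(1), of 0] assms(2)[of 0] by linarith
  have "cmod (u n j) \<le> B" for n j
  proof -
    have "(cmod (u n j))\<^sup>2 \<le> B\<^sup>2"
      using partial[of "{j}" n] by simp
    then show ?thesis
      using \<open>B \<ge> 0\<close> by (rule power2_le_imp_le)
  qed
  then have bounded: "bounded (range (\<lambda>n. u n j))" for j
    by (intro boundedI[of _ B]) auto
  obtain r where "strict_mono r" and "\<And>j. convergent (\<lambda>i. u (r i) j)"
    using diagonal_coordinatewise_convergent_subseq[of u, OF bounded] by blast
  then have limit: "(\<lambda>i. u (r i) j) \<longlonglongrightarrow> lim (\<lambda>i. u (r i) j)" for j
    by (simp add: convergent_LIMSEQ_iff)
  have "(\<Sum>j\<le>K. (cmod (lim (\<lambda>i. u (r i) j)))\<^sup>2) \<le> B\<^sup>2" for K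
  proof (rule LIMSEQ_le_const2)
    show "(\<lambda>i. \<Sum>j\<le>K. (cmod (u (r i) j))\<^sup>2) \<longlonglongrightarrow> (\<Sum>j\<le>K. (cmod (lim (\<lambda>i. u (r i) j)))\<^sup>2)"
      by (intro tendsto_intros limit)
    show "\<exists>N. \<forall>i\<ge>N. (\<Sum>j\<le>K. (cmod (u (r i) j))\<^sup>2) \<le> B\<^sup>2"
      using partial by blast
  qed
  then show ?thesis
    by (rule that[OF \<open>strict_mono r\<close> limit])
qed

lemma R_op_tendsto_zero:
  assumes "vanishing_hardy_tail \<alpha>"
    and D_lim: "\<And>j. (\<lambda>n. D n j) \<longlonglongrightarrow> 0"
    and D_bound: "\<And>n K. (\<Sum>j\<le>K. (cmod (D n j))\<^sup>2) \<le> C"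
  shows "(\<lambda>n. l2_norm (R_op \<alpha> (D n))) \<longlonglongrightarrow> 0"
proof (rule LIMSEQ_I)
  fix \<epsilon> :: real
  assume "\<epsilon> > 0"
  have "0 \<le> (\<Sum>j\<le>0. (cmod (D 0 j))\<^sup>2)"
    by (intro sum_nonneg) simp
  then have "C \<ge> 0"
    using D_bound[of 0 0] by linarith
  define \<delta> where "\<delta> = \<epsilon>\<^sup>2 / (16 * (C + 1))"
  have "\<delta> > 0" "4 * \<delta> * C \<le> \<epsilon>\<^sup>2 / 4"
    unfolding \<delta>_def using \<open>\<epsilon> > 0\<close> \<open>C \<ge> 0\<close> by (auto simp: field_simps)
  then obtain N where N: "\<And>n K. N \<le> n \<Longrightarrow> n \<le> K \<Longrightarrow> real (n+1) * (\<Sum>m\<in>{n..K}. (cmod (\<alpha> m))\<^sup>2) \<le> \<delta>"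
    using vanishing_hardy_tailD[OF assms(1)] by blast
  have "(\<lambda>n. \<Sum>k<N. (cmod (R_op \<alpha> (D n) k))\<^sup>2) \<longlonglongrightarrow> (\<Sum>k<N. (cmod (\<alpha> k * (\<Sum>j\<le>k. 0)))\<^sup>2)"
    unfolding R_op_def by (intro tendsto_intros D_lim)
  then have "\<forall>\<^sub>F n in sequentially. (\<Sum>k<N. (cmod (R_op \<alpha> (D n) k))\<^sup>2) < \<epsilon>\<^sup>2 / 4"
    using \<open>\<epsilon> > 0\<close> by (intro order_tendstoD(2)) auto
  then obtain M where M: "\<And>n. M \<le> n \<Longrightarrow> (\<Sum>k<N. (cmod (R_op \<alpha> (D n) k))\<^sup>2) < \<epsilon>\<^sup>2 / 4"
    unfolding eventually_sequentially by blast
  have "norm (l2_norm (R_op \<alpha> (D n)) - 0) < \<epsilon>" if "M \<le> n" for n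
  proof -
    have "(\<Sum>k\<le>K. (cmod (R_op \<alpha> (D n) k))\<^sup>2) \<le> \<epsilon>\<^sup>2 / 2" for K
    proof -
      have "(\<Sum>k\<le>K. (cmod (R_op \<alpha> (D n) k))\<^sup>2)
          \<le> (\<Sum>k<N. (cmod (R_op \<alpha> (D n) k))\<^sup>2) + 4 * \<delta> * (\<Sum>j\<le>K. (cmod (D n j))\<^sup>2)"
        by (rule sum_R_op_square_le) (use N in auto)
      also have "\<dots> \<le> (\<Sum>k<N. (cmod (R_op \<alpha> (D n) k))\<^sup>2) + 4 * \<delta> * C"
        using \<open>\<delta> > 0\<close> D_bound by (intro add_left_mono mult_left_mono) auto
      finally show ?thesis
        using M[OF that] \<open>4 * \<delta> * C \<le> \<epsilon>\<^sup>2 / 4\<close> by linarith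
    qed
    then have "in_l2 (R_op \<alpha> (D n))" "l2_norm (R_op \<alpha> (D n)) \<le> sqrt (\<epsilon>\<^sup>2 / 2)"
      by (rule in_l2_bounded_partial_sums)+
    moreover have "sqrt (\<epsilon>\<^sup>2 / 2) < \<epsilon>"
      using \<open>\<epsilon> > 0\<close> real_sqrt_less_mono[of "\<epsilon>\<^sup>2 / 2" "\<epsilon>\<^sup>2"] by simp
    ultimately show ?thesis
      using l2_norm_nonneg by simp
  qed
  then show "\<exists>M. \<forall>n\<ge>M. norm (l2_norm (R_op \<alpha> (D n)) - 0) < \<epsilon>"
    by blast
qed

lemma vanishing_hardy_tail_imp_compact:
  assumes "in_l2 \<alpha>" "vanishing_hardy_tail \<alpha>"
  shows "compact_op_l2 (R_op \<alpha>)"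
  unfolding compact_op_l2_def
proof (intro conjI allI impI)
  show "in_l2 (R_op \<alpha> f)" if "in_l2 f" for f
    using assms that by (rule in_l2_R_op)
next
  fix u :: "nat \<Rightarrow> nat \<Rightarrow> complex"
  assume "(\<forall>n. in_l2 (u n)) \<and> (\<exists>B. \<forall>n. l2_norm (u n) \<le> B)"
  then obtain B where u_l2: "\<And>n. in_l2 (u n)" and u_bound: "\<And>n. l2_norm (u n) \<le> B"
    by blast
  obtain r v where "strict_mono r" and v_lim: "\<And>j. (\<lambda>i. u (r i) j) \<longlonglongrightarrow> v j"
    and v_bound: "\<And>K. (\<Sum>j\<le>K. (cmod (v j))\<^sup>2) \<le> B\<^sup>2"
    using l2_bounded_coordinatewise_convergent_subseq[of u B, OF u_l2 u_bound] by blast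
  define D where "D n j = u (r n) j - v j" for n j
  have "(\<lambda>n. l2_norm (R_op \<alpha> (D n))) \<longlonglongrightarrow> 0"
  proof (rule R_op_tendsto_zero[OF assms(2)])
    show "(\<lambda>n. D n j) \<longlonglongrightarrow> 0" for j
      unfolding D_def using tendsto_diff[OF v_lim[of j] tendsto_const[of "v j"]] by simp
    show "(\<Sum>j\<le>K. (cmod (D n j))\<^sup>2) \<le> 4 * B\<^sup>2" for n K
    proof -
      have "(\<Sum>j\<le>K. (cmod (D n j))\<^sup>2) \<le> 2 * (\<Sum>j\<le>K. (cmod (u (r n) j))\<^sup>2) + 2 * (\<Sum>j\<le>K. (cmod (v j))\<^sup>2)"
        unfolding D_def sum_distrib_left sum.distrib[symmetric] by (intro sum_mono norm_diff_square_le)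
      then show ?thesis
        using sum_le_square_if_l2_norm_le[OF u_l2 u_bound, of "{..K}" "r n"] v_bound[of K] by simp
    qed
  qed
  moreover have "in_l2 (R_op \<alpha> v)"
    using assms in_l2_bounded_partial_sums(1)[OF v_bound] by (rule in_l2_R_op)
  moreover have "(\<lambda>k. R_op \<alpha> (u (r n)) k - R_op \<alpha> v k) = R_op \<alpha> (D n)" for n
    unfolding D_def R_op_diff ..
  ultimately show "\<exists>r g. strict_mono r \<and> in_l2 g \<and> (\<lambda>n. l2_norm (\<lambda>k. R_op \<alpha> (u (r n)) k - g k)) \<longlonglongrightarrow> 0"
    using \<open>strict_mono r\<close> by (intro exI[of _ r] exI[of _ "R_op \<alpha> v"]) simp
qed

lemma l2_convergent_tails_uniformly_small:
  assumes "in_l2 g" "\<And>i. in_l2 (x i)" "(\<lambda>i. l2_norm (\<lambda>k. x i k - g k)) \<longlonglongrightarrow> 0"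
    and "filterlim n at_top sequentially" "\<delta> > 0"
  shows "\<forall>\<^sub>F i in sequentially. \<forall>K. (\<Sum>k\<in>{n i..K}. (cmod (x i k))\<^sup>2) < \<delta>"
proof -
  obtain M where M: "\<And>m m'. M \<le> m \<Longrightarrow> norm (\<Sum>k\<in>{m..<m'}. (cmod (g k))\<^sup>2) < \<delta> / 4"
    using assms(1,5) unfolding in_l2_def summable_Cauchy by (meson divide_pos_pos zero_less_numeral)
  have "\<forall>\<^sub>F i in sequentially. M \<le> n i"
    using assms(4) by (simp add: filterlim_at_top)
  moreover have "\<forall>\<^sub>F i in sequentially. l2_norm (\<lambda>k. x i k - g k) < sqrt (\<delta> / 4)"
    using assms(3,5) by (intro order_tendstoD(2)) auto
  ultimately show ?thesis
  proof eventually_elim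
    case (elim i)
    have "(\<Sum>k\<in>{n i..K}. (cmod (x i k))\<^sup>2) < \<delta>" for K
    proof -
      have "(\<Sum>k\<in>{n i..K}. (cmod (x i k))\<^sup>2)
          \<le> 2 * (\<Sum>k\<in>{n i..K}. (cmod (x i k - g k))\<^sup>2) + 2 * (\<Sum>k\<in>{n i..<Suc K}. (cmod (g k))\<^sup>2)"
        unfolding atLeastLessThanSuc_atLeastAtMost sum_distrib_left sum.distrib[symmetric]
        using norm_diff_square_le[of "x i k - g k" "- g k" for k] by (intro sum_mono) simp
      moreover have "(\<Sum>k\<in>{n i..K}. (cmod (x i k - g k))\<^sup>2) \<le> (l2_norm (\<lambda>k. x i k - g k))\<^sup>2"
        using in_l2_diff[OF assms(2) assms(1)] by (rule sum_le_l2_norm_square) simp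
      moreover have "(l2_norm (\<lambda>k. x i k - g k))\<^sup>2 < (sqrt (\<delta> / 4))\<^sup>2"
        using elim(2) l2_norm_nonneg[OF in_l2_diff[OF assms(2) assms(1)]] by (intro power_strict_mono) auto
      moreover have "(\<Sum>k\<in>{n i..<Suc K}. (cmod (g k))\<^sup>2) < \<delta> / 4"
        using M[OF elim(1), of "Suc K"] by simp
      ultimately show ?thesis
        using \<open>\<delta> > 0\<close> by simp
    qed
    then show ?case
      by blast
  qed
qed

definition initial_block :: "nat \<Rightarrow> nat \<Rightarrow> complex" where
  "initial_block n j = (if j \<le> n then of_real (1 / sqrt (real (n+1))) else 0)"

lemma sum_square_initial_block_le: "(\<Sum>j\<le>J. (cmod (initial_block n j))\<^sup>2) \<le> 1"
proof -
  have "(\<Sum>j\<le>J. (cmod (initial_block n j))\<^sup>2) = (\<Sum>j\<le>J. if j \<le> n then 1 / real (n+1) else 0)"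
    unfolding initial_block_def by (intro sum.cong) (auto simp: power_divide norm_divide)
  also have "\<dots> = real (min J n + 1) / real (n+1)"
    by (simp add: sum_atMost_if_atMost)
  also have "\<dots> \<le> 1"
    by simp
  finally show ?thesis .
qed

lemma norm_R_op_initial_block_square:
  assumes "n \<le> k"
  shows "(cmod (R_op \<alpha> (initial_block n) k))\<^sup>2 = real (n+1) * (cmod (\<alpha> k))\<^sup>2"
proof -
  have "(\<Sum>j\<le>k. initial_block n j) = (of_real (real (n+1) / sqrt (real (n+1))) :: complex)"
    using assms unfolding initial_block_def by (simp add: sum_atMost_if_atMost min_absorb2)
  also have "real (n+1) / sqrt (real (n+1)) = sqrt (real (n+1))"
    by (rule real_div_sqrt) simp
  finally show ?thesis
    unfolding R_op_def by (simp add: norm_mult power_mult_distrib)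
qed

lemma compact_imp_vanishing_hardy_tail:
  assumes "compact_op_l2 (R_op \<alpha>)"
  shows "vanishing_hardy_tail \<alpha>"
proof (rule ccontr)
  assume "\<not> vanishing_hardy_tail \<alpha>"
  then obtain \<delta> :: real where "\<delta> > 0"
    and "\<forall>N. \<exists>n K. N \<le> n \<and> n \<le> K \<and> \<delta> < real (n+1) * (\<Sum>m\<in>{n..K}. (cmod (\<alpha> m))\<^sup>2)"
    unfolding vanishing_hardy_tail_def by (auto simp: not_le)
  then obtain n_of K_of where n_of_ge: "\<And>N. N \<le> n_of N"
    and big: "\<And>N. \<delta> < real (n_of N + 1) * (\<Sum>m\<in>{n_of N..K_of N}. (cmod (\<alpha> m))\<^sup>2)"
    by metis
  define u where "u i = initial_block (n_of i)" for i
  have u_l2: "in_l2 (u i)" and "l2_norm (u i) \<le> 1" for i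
    using in_l2_bounded_partial_sums[OF sum_square_initial_block_le] by (simp_all add: u_def)
  then obtain r g where "strict_mono r" "in_l2 g"
    and lim: "(\<lambda>i. l2_norm (\<lambda>k. R_op \<alpha> (u (r i)) k - g k)) \<longlonglongrightarrow> 0"
    using assms unfolding compact_op_l2_def by blast
  have R_l2: "in_l2 (R_op \<alpha> (u (r i)))" for i
    using assms u_l2 unfolding compact_op_l2_def by blast
  have "i \<le> n_of (r i)" for i
    using seq_suble[OF \<open>strict_mono r\<close>, of i] n_of_ge[of "r i"] by linarith
  then have "filterlim (\<lambda>i. n_of (r i)) at_top sequentially"
    by (intro filterlim_at_top_mono[OF filterlim_ident] always_eventually) simp
  then have "\<forall>\<^sub>F i in sequentially. \<forall>K. (\<Sum>k\<in>{n_of (r i)..K}. (cmod (R_op \<alpha> (u (r i)) k))\<^sup>2) < \<delta>"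
    using \<open>in_l2 g\<close> R_l2 lim \<open>\<delta> > 0\<close> by (intro l2_convergent_tails_uniformly_small)
  then obtain i where "(\<Sum>k\<in>{n_of (r i)..K_of (r i)}. (cmod (R_op \<alpha> (u (r i)) k))\<^sup>2) < \<delta>"
    unfolding eventually_sequentially by blast
  moreover have "(\<Sum>k\<in>{n_of (r i)..K_of (r i)}. (cmod (R_op \<alpha> (u (r i)) k))\<^sup>2)
      = real (n_of (r i) + 1) * (\<Sum>m\<in>{n_of (r i)..K_of (r i)}. (cmod (\<alpha> m))\<^sup>2)"
    unfolding u_def sum_distrib_left by (intro sum.cong refl norm_R_op_initial_block_square) simp
  ultimately show False
    using big[of "r i"] by simp
qed

theorem theorem4p6:
  fixes \<alpha> :: "nat \<Rightarrow> complex"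
  assumes "in_l2 \<alpha>"
  shows "(compact_op_l2 (R_op \<alpha>) \<longleftrightarrow> (Ltail \<alpha> \<longlonglongrightarrow> 0))
       \<and> ((Ltail \<alpha> \<longlonglongrightarrow> 0) \<longleftrightarrow> (\<forall>\<epsilon>>0. finite_length \<alpha> \<epsilon>))"
proof -
  have compact: "compact_op_l2 (R_op \<alpha>) \<longleftrightarrow> vanishing_hardy_tail \<alpha>"
    using compact_imp_vanishing_hardy_tail vanishing_hardy_tail_imp_compact[OF assms] by blast
  have Ltail: "(Ltail \<alpha> \<longlonglongrightarrow> 0) \<longleftrightarrow> vanishing_hardy_tail \<alpha>"
  proof
    show "Ltail \<alpha> \<longlonglongrightarrow> 0 \<Longrightarrow> vanishing_hardy_tail \<alpha>"
      by (intro LI_small_imp_vanishing_hardy_tail[OF assms] Ltail_tendsto_zeroD)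
    show "vanishing_hardy_tail \<alpha> \<Longrightarrow> Ltail \<alpha> \<longlonglongrightarrow> 0"
      by (intro Ltail_tendsto_zeroI LI_uniformly_small)
  qed
  have finite_length: "(\<forall>\<epsilon>>0. finite_length \<alpha> \<epsilon>) \<longleftrightarrow> vanishing_hardy_tail \<alpha>"
  proof
    show "\<forall>\<epsilon>>0. finite_length \<alpha> \<epsilon> \<Longrightarrow> vanishing_hardy_tail \<alpha>"
      by (intro LI_small_imp_vanishing_hardy_tail[OF assms] finite_lengthD) simp
    show "vanishing_hardy_tail \<alpha> \<Longrightarrow> \<forall>\<epsilon>>0. finite_length \<alpha> \<epsilon>"
      using LI_uniformly_small finite_lengthI by meson
  qed
  show ?thesis
    using compact Ltail finite_length by blast
qed

end
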